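(* Let $n\ge1$. There exist constants $\delta_0\in(0,1)$, $C_n>0$ and $C'_n>0$ such that for all $k\in\mathbb N_0$ and $\lambda\in\mathbb R\setminus\{0\}$ with $\mu|\lambda|\le\delta_0$, where $\mu=2(2k+n)$, $$\big|R_k(\lambda,\sigma)-C_n\big|\le C'_n\,(\mu|\lambda|)^{1/2}.$$
   Context: For $\beta>-1$ and $k\in\mathbb N_0$ the Laguerre polynomial $L_k^\beta$ is defined by $e^{-r}r^{\beta}L_k^\beta(r)=\frac1{k!}\frac{d^k}{dr^k}\big(e^{-r}r^{k+\beta}\big)$. For $n\ge1$, $k\in\mathbb N_0$, $\lambda\in\mathbb R$, set $c_n=\frac{\Gamma(\frac{n+1}2)\Gamma(n)}{\sqrt\pi\,\Gamma(\frac n2)}$ and $$R_k(\lambda,\sigma)=c_n\frac{\Gamma(k+1)}{\Gamma(k+n)}\int_{-\pi/2}^{\pi/2}L_k^{n-1}\!\big(\tfrac12|\lambda|\cos\theta\big)\,e^{-\frac14|\lambda|\cos\theta}\,e^{\frac i4\lambda\sin\theta}\,(\cos\theta)^{n-1}\,d\theta .$$ *)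

theory Defs
  imports "HOL-Analysis.Analysis"
begin

text \<open>Laguerre polynomial via the Rodrigues formula
  e^{-r} r^beta L_k^beta(r) = (1/k!) d^k/dr^k (e^{-r} r^{k+beta}), for r > 0.\<close>
definition laguerre :: "nat \<Rightarrow> real \<Rightarrow> real \<Rightarrow> real" where
  "laguerre k \<beta> r =
     exp r * r powr (-\<beta>) / fact k *
     (deriv ^^ k) (\<lambda>s. exp (-s) * s powr (real k + \<beta>)) r"

definition c_const :: "nat \<Rightarrow> real" where
  "c_const n = Gamma ((real n + 1) / 2) * Gamma (real n) / (sqrt pi * Gamma (real n / 2))"

definition R_fun :: "nat \<Rightarrow> nat \<Rightarrow> real \<Rightarrow> complex" where
  "R_fun n k lam =
     complex_of_real (c_const n * Gamma (real k + 1) / Gamma (real k + real n)) *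
     integral {-pi/2..pi/2} (\<lambda>\<theta>.
        complex_of_real (laguerre k (real n - 1) (\<bar>lam\<bar> * cos \<theta> / 2)
          * exp (- \<bar>lam\<bar> * cos \<theta> / 4) * (cos \<theta>) ^ (n - 1))
        * cis (lam * sin \<theta> / 4))"

end

theory Submission
  imports Defs
begin

text \<open>Expanding the Rodrigues formula gives
  k!/(k+a)! L_k^a(x) = \<Sum>_i C(k,i) (-1)^(k-i) x^(k-i) / (k+a-i)!,
  whose value at 0 is 1/a!; for x \<ge> 0 all other terms together are bounded by
  ((1+x)^k - 1)/a! \<le> e k x / a! as long as k x \<le> 1.
  With |e^(-s) - 1| \<le> s and |e^(is) - 1| \<le> |s| the integrand of R_k(\<lambda>,\<sigma>) therefore
  differs from c_n/(n-1)! cos^(n-1) \<theta> by O(\<mu>|\<lambda>|) uniformly in \<theta>, so R_k is within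
  O(\<mu>|\<lambda>|) \<le> O((\<mu>|\<lambda>|)^(1/2)) of C_n = c_n/(n-1)! \<integral> cos^(n-1) (which equals 1 by
  Wallis' formula, a fact the estimate does not need).\<close>

text \<open>Truncated subtraction makes \<open>falling_fact m i\<close> vanish for \<open>i > m\<close>, so the junk powers
  \<open>s ^ (m - i) = 1\<close> in \<open>rodrigues_poly\<close> never contribute.\<close>

definition falling_fact :: "nat \<Rightarrow> nat \<Rightarrow> real" where
  "falling_fact m i = (\<Prod>t<i. real (m - t))"

definition rodrigues_poly :: "nat \<Rightarrow> nat \<Rightarrow> real \<Rightarrow> real" where
  "rodrigues_poly m j s =
     (\<Sum>i\<le>j. real (j choose i) * (-1) ^ (j + i) * (falling_fact m i * s ^ (m - i)))"

lemma falling_fact_Suc: "falling_fact m (Suc i) = falling_fact m i * real (m - i)"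
  by (simp add: falling_fact_def)

lemma falling_fact_mult_fact: "i \<le> m \<Longrightarrow> falling_fact m i * fact (m - i) = fact m"
proof (induction i)
  case (Suc i)
  then have "fact (m - i) = real (m - i) * (fact (m - Suc i) :: real)"
    by (metis Suc_diff_Suc Suc_le_lessD fact_Suc of_nat_Suc)
  with Suc show ?case by (simp add: falling_fact_Suc)
qed (simp add: falling_fact_def)

lemma has_real_derivative_rodrigues_poly:
  "(rodrigues_poly m j has_real_derivative
     (\<Sum>i\<le>j. real (j choose i) * (-1) ^ (j + i) * (falling_fact m (Suc i) * s ^ (m - Suc i)))) (at s)"
proof -
  have "(rodrigues_poly m j has_real_derivative
     (\<Sum>i\<le>j. real (j choose i) * (-1) ^ (j + i) *
        (falling_fact m i * (real (m - i) * s ^ (m - i - 1))))) (at s)"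
    unfolding rodrigues_poly_def [abs_def]
    by (auto intro!: derivative_eq_intros sum.cong simp: algebra_simps)
  moreover have "(\<Sum>i\<le>j. real (j choose i) * (-1) ^ (j + i) *
        (falling_fact m i * (real (m - i) * s ^ (m - i - 1)))) =
     (\<Sum>i\<le>j. real (j choose i) * (-1) ^ (j + i) * (falling_fact m (Suc i) * s ^ (m - Suc i)))"
    by (intro sum.cong refl) (simp add: falling_fact_Suc)
  ultimately show ?thesis
    by simp
qed

lemma alternating_choose_sum_Suc:
  fixes q :: "nat \<Rightarrow> 'a::comm_ring_1"
  shows "(\<Sum>i\<le>Suc j. of_nat (Suc j choose i) * (-1) ^ (Suc j + i) * q i) =
    (\<Sum>i\<le>j. of_nat (j choose i) * (-1) ^ (j + i) * q (Suc i)) -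
    (\<Sum>i\<le>j. of_nat (j choose i) * (-1) ^ (j + i) * q i)"
proof -
  define G where "G i = of_nat (j choose i) * (-1) ^ (j + i) * q i" for i
  have "(\<Sum>i\<le>Suc j. of_nat (Suc j choose i) * (-1) ^ (Suc j + i) * q i) =
     (-1) ^ Suc j * q 0 + (\<Sum>i\<le>j. of_nat (j choose i) * (-1) ^ (j + i) * q (Suc i))
       + (\<Sum>i\<le>j. of_nat (j choose Suc i) * (-1) ^ (j + i) * q (Suc i))"
    unfolding sum.atMost_Suc_shift by (simp add: sum.distrib algebra_simps del: sum.atMost_Suc)
  moreover have "(\<Sum>i\<le>j. of_nat (j choose Suc i) * (-1) ^ (j + i) * q (Suc i)) =
      - (\<Sum>i\<le>j. G (Suc i))"
    by (simp add: G_def sum_negf [symmetric])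
  moreover have "(\<Sum>i\<le>j. G (Suc i)) = (\<Sum>i\<le>j. G i) - G 0"
    using sum.atMost_Suc_shift [of G j] by (simp add: G_def binomial_eq_0)
  ultimately show ?thesis
    by (simp add: G_def)
qed

lemma higher_deriv_exp_minus_powr:
  assumes "s > 0"
  shows "(deriv ^^ j) (\<lambda>s. exp (-s) * s powr real m) s = exp (-s) * rodrigues_poly m j s"
  using assms
proof (induction j arbitrary: s)
  case 0
  then show ?case by (simp add: rodrigues_poly_def falling_fact_def powr_realpow)
next
  case (Suc j)
  define d where "d = (\<Sum>i\<le>j. real (j choose i) * (-1) ^ (j + i) *
                        (falling_fact m (Suc i) * s ^ (m - Suc i)))"
  have "((\<lambda>s. exp (-s) * rodrigues_poly m j s) has_real_derivative
          exp (-s) * (d - rodrigues_poly m j s)) (at s)"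
    using has_real_derivative_rodrigues_poly [of m j s] unfolding d_def
    by (auto intro!: derivative_eq_intros simp: algebra_simps)
  then have "((deriv ^^ j) (\<lambda>s. exp (-s) * s powr real m) has_real_derivative
          exp (-s) * (d - rodrigues_poly m j s)) (at s)"
    by (rule has_field_derivative_transform_within_open [of _ _ _ "{0<..}"]) (use Suc in auto)
  moreover have "rodrigues_poly m (Suc j) s = d - rodrigues_poly m j s"
    unfolding d_def rodrigues_poly_def
    by (rule alternating_choose_sum_Suc [of j "\<lambda>i. falling_fact m i * s ^ (m - i)"])
  ultimately show ?case
    by (simp add: DERIV_imp_deriv)
qed

definition laguerre_normalized :: "nat \<Rightarrow> nat \<Rightarrow> real \<Rightarrow> real" where
  "laguerre_normalized k a x =
     (\<Sum>i\<le>k. real (k choose i) * (-1) ^ (k + i) * x ^ (k - i) / fact (k + a - i))"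

lemma laguerre_normalized_eq:
  assumes "r > 0"
  shows "fact k / fact (k + a) * laguerre k (real a) r = laguerre_normalized k a r"
proof -
  define m where "m = k + a"
  have "laguerre k (real a) r = r powr (- real a) * rodrigues_poly m k r / fact k"
    using assms higher_deriv_exp_minus_powr [OF assms, of k m]
    by (simp add: laguerre_def m_def exp_minus field_simps)
  also have "r powr (- real a) * rodrigues_poly m k r =
      (\<Sum>i\<le>k. real (k choose i) * (-1) ^ (k + i) * falling_fact m i * r ^ (k - i))"
    unfolding rodrigues_poly_def sum_distrib_left
  proof (intro sum.cong refl)
    fix i assume "i \<in> {..k}"
    then have "r ^ (m - i) = r ^ (k - i) * r ^ a"
      by (simp add: m_def power_add [symmetric])
    then show "r powr (- real a) * (real (k choose i) * (-1) ^ (k + i) * (falling_fact m i * r ^ (m - i))) =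
        real (k choose i) * (-1) ^ (k + i) * falling_fact m i * r ^ (k - i)"
      using assms by (simp add: powr_minus powr_realpow field_simps)
  qed
  finally have "fact k / fact m * laguerre k (real a) r =
      (\<Sum>i\<le>k. real (k choose i) * (-1) ^ (k + i) * falling_fact m i * r ^ (k - i)) / fact m"
    by simp
  also have "\<dots> = laguerre_normalized k a r"
    unfolding laguerre_normalized_def sum_divide_distrib
  proof (intro sum.cong refl)
    fix i assume "i \<in> {..k}"
    then have "falling_fact m i = fact m / fact (k + a - i)"
      using falling_fact_mult_fact [of i m] by (simp add: m_def field_simps)
    then show "real (k choose i) * (-1) ^ (k + i) * falling_fact m i * r ^ (k - i) / fact m =
        real (k choose i) * (-1) ^ (k + i) * r ^ (k - i) / fact (k + a - i)"
      by simp
  qed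
  finally show ?thesis
    by (simp add: m_def)
qed

lemma laguerre_normalized_deviation:
  assumes "x \<ge> 0"
  shows "\<bar>fact a * laguerre_normalized k a x - 1\<bar> \<le> (1 + x) ^ k - 1"
proof -
  define T where "T i = real (k choose i) * (-1) ^ (k + i) * x ^ (k - i) * (fact a / fact (k + a - i))" for i
  have "fact a * laguerre_normalized k a x - 1 = (\<Sum>i<k. T i)"
    by (simp add: laguerre_normalized_def T_def sum_distrib_left lessThan_Suc_atMost [symmetric] field_simps)
  also have "\<bar>\<Sum>i<k. T i\<bar> \<le> (\<Sum>i<k. real (k choose i) * x ^ (k - i))"
  proof (rule order_trans [OF sum_abs sum_mono])
    fix i assume "i \<in> {..<k}"
    then have "fact a \<le> (fact (k + a - i) :: real)"
      by (intro fact_mono) simp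
    then have "fact a / fact (k + a - i) \<le> (1 :: real)"
      by simp
    moreover have "\<bar>T i\<bar> = real (k choose i) * x ^ (k - i) * (fact a / fact (k + a - i))"
      using assms by (simp add: T_def abs_mult)
    ultimately show "\<bar>T i\<bar> \<le> real (k choose i) * x ^ (k - i)"
      using assms by (metis mult_left_le mult_nonneg_nonneg of_nat_0_le_iff zero_le_power)
  qed
  also have "\<dots> = (1 + x) ^ k - 1"
    using binomial_ring [of 1 x k] by (simp add: lessThan_Suc_atMost [symmetric] add.commute)
  finally show ?thesis .
qed

lemma one_plus_power_minus_one_le:
  fixes x :: real
  assumes "x \<ge> 0" "real k * x \<le> 1"
  shows "(1 + x) ^ k - 1 \<le> exp 1 * (real k * x)"
proof -
  have "(1 + x) ^ k \<le> exp x ^ k"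
    using assms exp_ge_add_one_self [of x] by (intro power_mono) auto
  also have "\<dots> = exp (real k * x)"
    by (simp add: exp_of_nat_mult)
  finally have "(1 + x) ^ k - 1 \<le> exp (real k * x) - 1"
    by simp
  also have "\<dots> \<le> real k * x * exp (real k * x)"
    using exp_ge_add_one_self [of "- (real k * x)"] by (simp add: exp_minus field_simps)
  also have "\<dots> \<le> real k * x * exp 1"
    using assms by (intro mult_left_mono) auto
  finally show ?thesis
    by (simp add: mult.commute)
qed

lemma fact_laguerre_normalized_minus_one_le:
  assumes "x \<ge> 0" "real k * x \<le> 1"
  shows "\<bar>fact a * laguerre_normalized k a x - 1\<bar> \<le> 3 * (real k * x)"
proof -
  have "\<bar>fact a * laguerre_normalized k a x - 1\<bar> \<le> exp 1 * (real k * x)"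
    using laguerre_normalized_deviation [OF assms(1)] one_plus_power_minus_one_le [OF assms]
    by (rule order_trans)
  also have "\<dots> \<le> 3 * (real k * x)"
    using assms(1) by (intro mult_right_mono exp_le) simp
  finally show ?thesis .
qed

lemma norm_cis_minus_one_le: "norm (cis a - 1) \<le> \<bar>a\<bar>"
proof -
  have "(norm (cis a - 1))\<^sup>2 = (cos a - 1)\<^sup>2 + (sin a)\<^sup>2"
    by (simp add: cmod_power2)
  also have "\<dots> = 4 * (sin (a / 2))\<^sup>2"
    using sin_cos_squared_add [of a] cos_double_sin [of "a / 2"]
    by (simp add: power2_eq_square algebra_simps)
  also have "\<dots> \<le> 4 * (a / 2)\<^sup>2"
    using power_mono [OF abs_sin_x_le_abs_x [of "a / 2"], of 2] by (simp add: power_divide)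
  also have "\<dots> = \<bar>a\<bar>\<^sup>2"
    by (simp add: power2_eq_square)
  finally show ?thesis
    by (rule power2_le_imp_le) simp
qed

lemma norm_mult3_minus_one_le:
  fixes a b c :: "'a::real_normed_div_algebra"
  assumes "norm b \<le> 1" "norm c \<le> 1"
  shows "norm (a * b * c - 1) \<le> norm (a - 1) + norm (b - 1) + norm (c - 1)"
proof -
  have "a * b * c - 1 = (a - 1) * b * c + (b - 1) * c + (c - 1)"
    by (simp add: algebra_simps)
  also have "norm \<dots> \<le> norm (a - 1) * norm b * norm c + norm (b - 1) * norm c + norm (c - 1)"
    using norm_triangle_ineq [of "(a - 1) * b * c + (b - 1) * c" "c - 1"]
      norm_triangle_ineq [of "(a - 1) * b * c" "(b - 1) * c"]
    by (simp add: norm_mult)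
  also have "\<dots> \<le> norm (a - 1) + norm (b - 1) + norm (c - 1)"
    using assms mult_le_one [OF assms(1) norm_ge_zero assms(2)]
    by (intro add_mono) (auto simp: mult.assoc intro: mult_left_le)
  finally show ?thesis .
qed

lemma norm_of_real_mult_deviation_le:
  fixes d p y w :: real and z :: complex
  assumes "d \<ge> 0" "0 \<le> y" "y \<le> 1" "0 \<le> w" "w \<le> 1" "norm z \<le> 1"
  shows "norm (complex_of_real (d * p * y * w) * z - complex_of_real (d * w))
      \<le> d * (\<bar>p - 1\<bar> + \<bar>y - 1\<bar> + norm (z - 1))"
proof -
  have norm_of_real_minus_one: "norm (complex_of_real u - 1) = \<bar>u - 1\<bar>" for u
    by (metis norm_of_real of_real_1 of_real_diff)
  have "complex_of_real (d * p * y * w) * z - complex_of_real (d * w)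
      = complex_of_real (d * w) * (complex_of_real p * complex_of_real y * z - 1)"
    by (simp add: algebra_simps)
  also have "norm \<dots> \<le> (d * 1) * (\<bar>p - 1\<bar> + \<bar>y - 1\<bar> + norm (z - 1))"
    unfolding norm_mult
  proof (intro mult_mono)
    show "norm (complex_of_real (d * w)) \<le> d * 1"
      unfolding norm_of_real using assms by (simp add: mult_left_le)
    show "norm (complex_of_real p * complex_of_real y * z - 1) \<le> \<bar>p - 1\<bar> + \<bar>y - 1\<bar> + norm (z - 1)"
      using norm_mult3_minus_one_le [of "complex_of_real y" z "complex_of_real p"] assms
      unfolding norm_of_real_minus_one by simp
  qed (use assms in auto)
  finally show ?thesis
    by simp
qed

lemma integral_cos_power_pos: "integral {-pi/2..pi/2} (\<lambda>t. cos t ^ a) > 0"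
proof -
  have cos1: "cos (1::real) > 0"
    using cos_gt_zero_pi [of 1] pi_gt3 by simp
  have integrable: "(\<lambda>t. cos t ^ a) integrable_on {u..v}" for u v :: real
    by (intro integrable_continuous_interval continuous_intros)
  have "0 < integral {-1..1} (\<lambda>t::real. cos (1::real) ^ a)"
    using cos1 by simp
  also have "\<dots> \<le> integral {-1..1} (\<lambda>t. cos t ^ a)"
  proof (rule integral_le [OF integrable_const_ivl integrable])
    fix t :: real assume "t \<in> {-1..1}"
    then have "cos 1 \<le> cos \<bar>t\<bar>"
      using pi_gt3 by (subst cos_mono_le_eq) auto
    then show "cos 1 ^ a \<le> cos t ^ a"
      using cos1 by (intro power_mono) auto
  qed
  also have "\<dots> \<le> integral {-pi/2..pi/2} (\<lambda>t. cos t ^ a)"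
    using pi_gt3
    by (intro integral_subset_le integrable) (auto intro!: zero_le_power cos_ge_zero)
  finally show ?thesis .
qed

lemma R_fun_eq_integral:
  assumes "n \<ge> 1" "lam \<noteq> 0"
  shows "R_fun n k lam = integral {-pi/2..pi/2} (\<lambda>\<theta>.
      complex_of_real (c_const n * laguerre_normalized k (n - 1) (\<bar>lam\<bar> * cos \<theta> / 2)
        * exp (- \<bar>lam\<bar> * cos \<theta> / 4) * cos \<theta> ^ (n - 1)) * cis (lam * sin \<theta> / 4))"
proof -
  define A where "A = c_const n * Gamma (real k + 1) / Gamma (real k + real n)"
  have normalize: "A * laguerre k (real n - 1) x = c_const n * laguerre_normalized k (n - 1) x"
    if "x > 0" for x
  proof -
    have "Gamma (real k + 1) = fact k" "Gamma (real k + real n) = fact (k + (n - 1))"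
      using Gamma_fact [of k, where 'a=real] Gamma_fact [of "k + (n - 1)", where 'a=real] assms(1)
      by (simp_all add: of_nat_diff add.commute)
    then have "A * laguerre k (real n - 1) x =
        c_const n * (fact k / fact (k + (n - 1)) * laguerre k (real (n - 1)) x)"
      using assms(1) by (simp add: A_def of_nat_diff)
    also have "\<dots> = c_const n * laguerre_normalized k (n - 1) x"
      by (simp only: laguerre_normalized_eq [OF that])
    finally show ?thesis .
  qed
  show ?thesis
    unfolding R_fun_def A_def [symmetric] integral_mult_right [symmetric]
  proof (intro integral_spike [of "{-pi/2, pi/2}"])
    fix \<theta> assume \<theta>: "\<theta> \<in> {-pi/2..pi/2} - {-pi/2, pi/2}"
    then have "cos \<theta> > 0"
      by (auto intro!: cos_gt_zero_pi)
    then have x_pos: "\<bar>lam\<bar> * cos \<theta> / 2 > 0"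
      using assms(2) by simp
    have "complex_of_real (c_const n * laguerre_normalized k (n - 1) (\<bar>lam\<bar> * cos \<theta> / 2)
          * exp (- \<bar>lam\<bar> * cos \<theta> / 4) * cos \<theta> ^ (n - 1)) =
        complex_of_real A * complex_of_real (laguerre k (real n - 1) (\<bar>lam\<bar> * cos \<theta> / 2)
          * exp (- \<bar>lam\<bar> * cos \<theta> / 4) * cos \<theta> ^ (n - 1))"
      using normalize [OF x_pos] by (simp add: mult_ac flip: of_real_mult)
    then show "complex_of_real (c_const n * laguerre_normalized k (n - 1) (\<bar>lam\<bar> * cos \<theta> / 2)
          * exp (- \<bar>lam\<bar> * cos \<theta> / 4) * cos \<theta> ^ (n - 1)) * cis (lam * sin \<theta> / 4) =
        complex_of_real A * (complex_of_real (laguerre k (real n - 1) (\<bar>lam\<bar> * cos \<theta> / 2)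
          * exp (- \<bar>lam\<bar> * cos \<theta> / 4) * cos \<theta> ^ (n - 1)) * cis (lam * sin \<theta> / 4))"
      by (simp only: mult.assoc)
  qed simp
qed

lemma c_const_pos: "n \<ge> 1 \<Longrightarrow> c_const n > 0"
  unfolding c_const_def by (auto intro!: divide_pos_pos mult_pos_pos)

lemma integrand_deviation_le:
  fixes c lam \<theta> :: real
  assumes "c \<ge> 0" "cos \<theta> \<ge> 0" "real k * \<bar>lam\<bar> \<le> 2"
  shows "norm (complex_of_real (c * laguerre_normalized k a (\<bar>lam\<bar> * cos \<theta> / 2)
            * exp (- \<bar>lam\<bar> * cos \<theta> / 4) * cos \<theta> ^ a) * cis (lam * sin \<theta> / 4)
          - complex_of_real (c / fact a * cos \<theta> ^ a))
      \<le> c / fact a * ((2 * real k + 1) * \<bar>lam\<bar>)"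
proof -
  define x where "x = \<bar>lam\<bar> * cos \<theta> / 2"
  define y where "y = exp (- \<bar>lam\<bar> * cos \<theta> / 4)"
  define z where "z = cis (lam * sin \<theta> / 4)"
  have x_nonneg: "x \<ge> 0" and x_le: "x \<le> \<bar>lam\<bar> / 2"
    using assms(2) by (auto simp: x_def mult_left_le)
  have kx_le: "real k * x \<le> real k * (\<bar>lam\<bar> / 2)"
    using x_le by (intro mult_left_mono) auto
  then have "\<bar>fact a * laguerre_normalized k a x - 1\<bar> \<le> 3 * (real k * x)"
    using assms(3) by (intro fact_laguerre_normalized_minus_one_le x_nonneg) simp
  then have laguerre_dev: "\<bar>fact a * laguerre_normalized k a x - 1\<bar> \<le> 2 * real k * \<bar>lam\<bar>"
    using kx_le x_nonneg by simp
  have y_bounds: "0 \<le> y" "y \<le> 1"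
    using assms(2) by (auto simp: y_def)
  have exp_dev: "\<bar>y - 1\<bar> \<le> \<bar>lam\<bar> / 4"
    using exp_ge_add_one_self [of "- \<bar>lam\<bar> * cos \<theta> / 4"] y_bounds mult_left_le [of "cos \<theta>" "\<bar>lam\<bar>"]
    by (simp add: y_def)
  have cis_dev: "norm (z - 1) \<le> \<bar>lam\<bar> / 4"
    using norm_cis_minus_one_le [of "lam * sin \<theta> / 4"]
      mult_left_le [OF abs_sin_le_one [of \<theta>] abs_ge_zero [of lam]]
    by (simp add: z_def abs_mult)
  have rescale: "c * laguerre_normalized k a x = c / fact a * (fact a * laguerre_normalized k a x)"
    by simp
  have "norm (complex_of_real (c * laguerre_normalized k a x * y * cos \<theta> ^ a) * z
          - complex_of_real (c / fact a * cos \<theta> ^ a))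
      \<le> c / fact a * (\<bar>fact a * laguerre_normalized k a x - 1\<bar> + \<bar>y - 1\<bar> + norm (z - 1))"
    unfolding rescale using assms(1,2) y_bounds
    by (intro norm_of_real_mult_deviation_le) (simp_all add: z_def power_le_one)
  also have "\<dots> \<le> c / fact a * ((2 * real k + 1) * \<bar>lam\<bar>)"
  proof (rule mult_left_mono)
    show "\<bar>fact a * laguerre_normalized k a x - 1\<bar> + \<bar>y - 1\<bar> + norm (z - 1)
        \<le> (2 * real k + 1) * \<bar>lam\<bar>"
      using laguerre_dev exp_dev cis_dev abs_ge_zero [of lam] unfolding distrib_right by linarith
  qed (use assms(1) in simp)
  finally show ?thesis
    by (simp add: x_def y_def z_def)
qed

lemma R_fun_deviation_le:
  assumes "n \<ge> 1" "lam \<noteq> 0" "real k * \<bar>lam\<bar> \<le> 2"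
  shows "cmod (R_fun n k lam - complex_of_real
            (c_const n / fact (n - 1) * integral {-pi/2..pi/2} (\<lambda>\<theta>. cos \<theta> ^ (n - 1))))
      \<le> c_const n / fact (n - 1) * pi * ((2 * real k + 1) * \<bar>lam\<bar>)"
proof -
  define a where "a = n - 1"
  define D where "D = c_const n / fact a"
  define H where "H \<theta> = complex_of_real (c_const n * laguerre_normalized k a (\<bar>lam\<bar> * cos \<theta> / 2)
      * exp (- \<bar>lam\<bar> * cos \<theta> / 4) * cos \<theta> ^ a) * cis (lam * sin \<theta> / 4)" for \<theta>
  define K where "K \<theta> = complex_of_real (D * cos \<theta> ^ a)" for \<theta>
  have H_cont: "continuous_on {-pi/2..pi/2} H" and K_cont: "continuous_on {-pi/2..pi/2} K"
    unfolding H_def K_def laguerre_normalized_def by (intro continuous_intros; simp)+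
  have "integral {-pi/2..pi/2} K = complex_of_real (D * integral {-pi/2..pi/2} (\<lambda>\<theta>. cos \<theta> ^ a))"
    unfolding K_def
    by (intro integral_unique has_integral_of_real has_integral_mult_right integrable_integral
        integrable_continuous_interval continuous_intros)
  then have "R_fun n k lam - complex_of_real (D * integral {-pi/2..pi/2} (\<lambda>\<theta>. cos \<theta> ^ a))
      = integral {-pi/2..pi/2} (\<lambda>\<theta>. H \<theta> - K \<theta>)"
    using R_fun_eq_integral [OF assms(1,2), of k] H_cont K_cont
    by (simp add: integral_diff integrable_continuous_interval H_def a_def)
  also have "norm \<dots> \<le> D * ((2 * real k + 1) * \<bar>lam\<bar>) * (pi/2 - - pi/2)"
  proof (rule integral_bound)
    show "continuous_on {-pi/2..pi/2} (\<lambda>\<theta>. H \<theta> - K \<theta>)"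
      using H_cont K_cont by (rule continuous_on_diff)
    fix \<theta> assume "\<theta> \<in> {-pi/2..pi/2}"
    then have "cos \<theta> \<ge> 0"
      by (auto intro!: cos_ge_zero)
    then show "norm (H \<theta> - K \<theta>) \<le> D * ((2 * real k + 1) * \<bar>lam\<bar>)"
      unfolding H_def K_def D_def
      using c_const_pos [OF assms(1)] assms(3) by (intro integrand_deviation_le) auto
  qed simp
  finally show ?thesis
    by (simp add: D_def a_def mult_ac)
qed

theorem lemma4p1:
  fixes n :: nat
  assumes "n \<ge> 1"
  shows "\<exists>\<delta>0 Cn Cn'. 0 < \<delta>0 \<and> \<delta>0 < 1 \<and> Cn > 0 \<and> Cn' > 0 \<and>
    (\<forall>(k::nat) (lam::real). lam \<noteq> 0 \<and> 2 * (2 * real k + real n) * \<bar>lam\<bar> \<le> \<delta>0 \<longrightarrow>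
      cmod (R_fun n k lam - complex_of_real Cn)
        \<le> Cn' * (2 * (2 * real k + real n) * \<bar>lam\<bar>) powr (1/2))"
proof -
  define D where "D = c_const n / fact (n - 1)"
  define I where "I = integral {-pi/2..pi/2} (\<lambda>\<theta>. cos \<theta> ^ (n - 1))"
  have D_pos: "D > 0"
    using c_const_pos [OF assms] by (simp add: D_def)
  show ?thesis
  proof (intro exI conjI allI impI)
    show "0 < (1/2 :: real)" "(1/2 :: real) < 1"
      by simp_all
    show "D * I > 0"
      using D_pos integral_cos_power_pos by (simp add: I_def)
    show "D * pi > 0"
      using D_pos by simp
    fix k :: nat and lam :: real
    define t where "t = 2 * (2 * real k + real n) * \<bar>lam\<bar>"
    assume "lam \<noteq> 0 \<and> 2 * (2 * real k + real n) * \<bar>lam\<bar> \<le> 1/2"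
    then have "lam \<noteq> 0" "0 \<le> t" "t \<le> 1"
      by (auto simp: t_def)
    have "real k * \<bar>lam\<bar> \<le> (2 * real k + 1) * \<bar>lam\<bar>" "(2 * real k + 1) * \<bar>lam\<bar> \<le> t"
      using assms unfolding t_def by (intro mult_right_mono; simp)+
    then have "cmod (R_fun n k lam - complex_of_real (D * I)) \<le> D * pi * ((2 * real k + 1) * \<bar>lam\<bar>)"
      using R_fun_deviation_le [OF assms \<open>lam \<noteq> 0\<close>] \<open>t \<le> 1\<close> by (simp add: D_def I_def)
    also have "\<dots> \<le> D * pi * t"
      using \<open>(2 * real k + 1) * \<bar>lam\<bar> \<le> t\<close> D_pos by (intro mult_left_mono) simp_all
    also have "\<dots> \<le> D * pi * t powr (1/2)"
      using powr_mono' [of "1/2" 1 t] \<open>0 \<le> t\<close> \<open>t \<le> 1\<close> D_pos by (simp add: powr_one)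
    finally show "cmod (R_fun n k lam - complex_of_real (D * I))
        \<le> D * pi * (2 * (2 * real k + real n) * \<bar>lam\<bar>) powr (1/2)"
      by (simp only: t_def)
  qed
qed

end
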